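(* Let $k\ge1$ and $n:=2^k$. For each $x\in\langle C_k\rangle$, $C(x)$ is an isometric cycle of length $2n$ in $Q_n$ with flip sequence $(1,2,\dots,n,1,2,\dots,n)$, and the vertex sets of the cycles $C(x)$, $x\in\langle C_k\rangle$, form a partition of the vertex set of $Q_n$.
   Context: $Q_n$ is the $n$-dimensional hypercube: vertices are all subsets of $[n]=\{1,\dots,n\}$, with $x,y$ adjacent iff $|x\oplus y|=1$, where $\oplus$ is symmetric difference; an edge $\{x,x\oplus\{i\}\}$ has direction $i$. The flip sequence of a path/cycle is the sequence of directions of its consecutive edges. A subgraph is isometric if it preserves graph distances of $Q_n$. $\langle X\rangle$ denotes the set of all symmetric differences of finitely many members of the family $X$. Define $O_1:=C_1:=\emptyset$ and for $k\ge2$: $O_k:=\{\{2i-1,2i+1\}:1\le i\le 2^{k-1}-1\}$ and $C_k:=O_k\cup 2\cdot C_{k-1}$, where $2\cdot X$ doubles every element of every set in $X$. (All sets of $\langle C_k\rangle$ are subsets of $[n-1]$.) For $x\in\langle C_k\rangle$, $C(x)$ is the cycle with vertices $v_0,v_1,\dots,v_{2n-1}$ (cyclically), where $v_j:=x\oplus\{1,\dots,j\}$ for $0\le j\le n$ and $v_{n+j}:=x\oplus[n]\oplus\{1,\dots,j\}$ for $0\le j\le n-1$. *)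

theory Defs
  imports Main
begin

definition symdiff :: "'a set \<Rightarrow> 'a set \<Rightarrow> 'a set" (infixl "\<ominus>" 65) where
  "A \<ominus> B = (A - B) \<union> (B - A)"

definition Qverts :: "nat \<Rightarrow> nat set set" where
  "Qverts n = Pow {1..n}"

definition Qadj :: "nat set \<Rightarrow> nat set \<Rightarrow> bool" where
  "Qadj x y \<longleftrightarrow> card (x \<ominus> y) = 1"

definition is_walk :: "'a set \<Rightarrow> ('a \<Rightarrow> 'a \<Rightarrow> bool) \<Rightarrow> 'a list \<Rightarrow> bool" where
  "is_walk V E xs \<longleftrightarrow> xs \<noteq> [] \<and> set xs \<subseteq> V \<and>
     (\<forall>i. Suc i < length xs \<longrightarrow> E (xs ! i) (xs ! Suc i))"

definition gdist :: "'a set \<Rightarrow> ('a \<Rightarrow> 'a \<Rightarrow> bool) \<Rightarrow> 'a \<Rightarrow> 'a \<Rightarrow> nat" where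
  "gdist V E u v = (LEAST m. \<exists>xs. is_walk V E xs \<and> hd xs = u \<and> last xs = v \<and> length xs = Suc m)"

definition isometric_subgraph ::
  "'a set \<Rightarrow> ('a \<Rightarrow> 'a \<Rightarrow> bool) \<Rightarrow> 'a set \<Rightarrow> ('a \<Rightarrow> 'a \<Rightarrow> bool) \<Rightarrow> bool" where
  "isometric_subgraph V E W F \<longleftrightarrow> W \<subseteq> V \<and> (\<forall>u v. F u v \<longrightarrow> u \<in> W \<and> v \<in> W \<and> E u v) \<and>
     (\<forall>u\<in>W. \<forall>v\<in>W. gdist W F u v = gdist V E u v)"

inductive_set span :: "'a set set \<Rightarrow> 'a set set" for X where
  span_empty: "{} \<in> span X"
| span_step: "a \<in> X \<Longrightarrow> s \<in> span X \<Longrightarrow> a \<ominus> s \<in> span X"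

definition Ofam :: "nat \<Rightarrow> nat set set" where
  "Ofam k = (if k < 2 then {} else {{2*i - 1, 2*i + 1} | i. 1 \<le> i \<and> i \<le> 2^(k-1) - 1})"

fun Cfam :: "nat \<Rightarrow> nat set set" where
  "Cfam 0 = {}"
| "Cfam (Suc 0) = {}"
| "Cfam (Suc (Suc m)) = Ofam (Suc (Suc m)) \<union> (\<lambda>S. (\<lambda>a. 2 * a) ` S) ` Cfam (Suc m)"

definition cyc_vertex :: "nat \<Rightarrow> nat set \<Rightarrow> nat \<Rightarrow> nat set" where
  "cyc_vertex n x j = (if j \<le> n then x \<ominus> {1..j} else x \<ominus> {1..n} \<ominus> {1..j - n})"

definition cyc_verts :: "nat \<Rightarrow> nat set \<Rightarrow> nat set set" where
  "cyc_verts n x = cyc_vertex n x ` {0..<2*n}"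

definition cyc_adj :: "nat \<Rightarrow> nat set \<Rightarrow> nat set \<Rightarrow> nat set \<Rightarrow> bool" where
  "cyc_adj n x u v \<longleftrightarrow> (\<exists>j<2*n. {u, v} = {cyc_vertex n x j, cyc_vertex n x ((j + 1) mod (2*n))})"

end

theory Submission
  imports Defs
begin

text \<open>
  Write the vertices of \<open>C(x)\<close> as \<open>v\<^sub>j = x \<ominus> M\<^sub>j\<close>, where the mask \<open>M\<^sub>j\<close> is \<open>{1..j}\<close> for
  \<open>j \<le> n\<close> and \<open>{j-n+1..n}\<close> for \<open>n < j < 2n\<close>. Consecutive masks differ exactly in the coordinate
  \<open>j mod n + 1\<close>, and masks \<open>t \<le> n\<close> steps apart differ in \<open>t\<close> coordinates; hence distances along
  \<open>C(x)\<close> are Hamming distances and the cycle is isometric.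

  The span of \<open>C\<^sub>k\<close> has an intrinsic description: \<open>x\<close> lies in it iff \<open>x \<subseteq> {1..<2^k}\<close>,
  \<open>x\<close> has an even number of odd elements (the part spanned by \<open>O\<^sub>k\<close>), and \<open>{a. 2a \<in> x}\<close> lies in
  the span of \<open>C\<^sub>k\<^sub>-\<^sub>1\<close> (the part spanned by \<open>2\<cdot>C\<^sub>k\<^sub>-\<^sub>1\<close>). Such a set never contains \<open>n\<close> and is
  never a nonempty interval, whereas the symmetric difference of two distinct masks is of one of
  these two forms. Since the span is closed under \<open>\<ominus>\<close>, \<open>x \<ominus> M\<^sub>i = y \<ominus> M\<^sub>j\<close> forces \<open>x = y\<close> and
  \<open>i = j\<close>, which gives injectivity and disjointness. Conversely, flipping a suitable initial
  segment \<open>{1..j}\<close> with \<open>j < n\<close> moves every subset of \<open>{1..n-1}\<close> into the span, which gives the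
  covering.
\<close>

section \<open>Symmetric differences and spans\<close>

lemma symdiff_iff [simp]: "a \<in> A \<ominus> B \<longleftrightarrow> (a \<in> A) \<noteq> (a \<in> B)"
  by (auto simp: symdiff_def)

lemma symdiff_assoc: "A \<ominus> B \<ominus> C = A \<ominus> (B \<ominus> C)"
  by auto

lemma symdiff_commute: "A \<ominus> B = B \<ominus> A"
  by auto

lemma symdiff_cancel_left: "(X \<ominus> A) \<ominus> (X \<ominus> B) = A \<ominus> B"
  by auto

lemma symdiff_symdiff_cancel: "(A \<ominus> B) \<ominus> (B \<ominus> C) = A \<ominus> C"
  by auto

lemma symdiff_empty [simp]: "A \<ominus> {} = A" "{} \<ominus> A = A"
  by auto

lemma symdiff_self [simp]: "A \<ominus> A = {}"
  by auto

lemma symdiff_singleton: "a \<notin> A \<Longrightarrow> A \<ominus> {a} = insert a A"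
  by auto

lemma symdiff_subset: "A \<subseteq> C \<Longrightarrow> B \<subseteq> C \<Longrightarrow> A \<ominus> B \<subseteq> C"
  by auto

lemma finite_symdiff [simp]: "finite A \<Longrightarrow> finite B \<Longrightarrow> finite (A \<ominus> B)"
  by (simp add: symdiff_def)

lemma image_symdiff: "inj f \<Longrightarrow> f ` (A \<ominus> B) = f ` A \<ominus> f ` B"
  by (simp add: symdiff_def image_Un image_set_diff)

lemma card_symdiff_triangle:
  assumes "finite A" "finite B" "finite C"
  shows "card (A \<ominus> C) \<le> card (A \<ominus> B) + card (B \<ominus> C)"
proof -
  have "card (A \<ominus> C) \<le> card ((A \<ominus> B) \<union> (B \<ominus> C))"
    using assms by (intro card_mono) auto
  also have "\<dots> \<le> card (A \<ominus> B) + card (B \<ominus> C)"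
    by (rule card_Un_le)
  finally show ?thesis .
qed

lemma even_card_symdiff_iff:
  assumes "finite A" "finite B"
  shows "even (card (A \<ominus> B)) \<longleftrightarrow> (even (card A) \<longleftrightarrow> even (card B))"
proof -
  have "A \<ominus> B = (A \<union> B) - (A \<inter> B)"
    by auto
  moreover have "card ((A \<union> B) - (A \<inter> B)) = card (A \<union> B) - card (A \<inter> B)"
    using assms by (intro card_Diff_subset) auto
  moreover have "card (A \<inter> B) \<le> card (A \<union> B)"
    using assms by (intro card_mono) auto
  ultimately have "card (A \<ominus> B) + card (A \<inter> B) = card (A \<union> B)"
    by simp
  moreover have "card A + card B = card (A \<union> B) + card (A \<inter> B)"
    using assms by (rule card_Un_Int)
  ultimately have "card A + card B = card (A \<ominus> B) + 2 * card (A \<inter> B)"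
    by simp
  then show ?thesis
    by (metis even_add even_mult_iff even_numeral)
qed

lemma span_symdiff: "s \<in> span X \<Longrightarrow> t \<in> span X \<Longrightarrow> s \<ominus> t \<in> span X"
  by (induction s rule: span.induct) (auto simp: symdiff_assoc intro: span.span_step)

lemma span_base: "a \<in> X \<Longrightarrow> a \<in> span X"
  using span.span_step[OF _ span.span_empty] by fastforce

lemma span_mono: "X \<subseteq> Y \<Longrightarrow> s \<in> span X \<Longrightarrow> s \<in> span Y"
  by (erule span.induct) (auto intro: span.intros)

lemma span_image:
  assumes "inj f"
  shows "s \<in> span X \<Longrightarrow> f ` s \<in> span ((`) f ` X)"
  by (induction s rule: span.induct) (auto simp: image_symdiff[OF assms] intro: span.intros)

section \<open>Walks and isometric subgraphs\<close>

lemma is_walk_Cons_Cons: "is_walk V E (u # v # vs) \<longleftrightarrow> u \<in> V \<and> E u v \<and> is_walk V E (v # vs)"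
  by (auto simp: is_walk_def less_Suc_eq_0_disj)

lemma is_walk_rev:
  assumes "is_walk V E xs" "\<And>u v. E u v \<Longrightarrow> E v u"
  shows "is_walk V E (rev xs)"
  unfolding is_walk_def
proof (intro conjI allI impI)
  show "rev xs \<noteq> []" "set (rev xs) \<subseteq> V"
    using assms(1) by (auto simp: is_walk_def)
  fix i
  assume i: "Suc i < length (rev xs)"
  let ?l = "length xs"
  have "E (xs ! (?l - Suc (Suc i))) (xs ! Suc (?l - Suc (Suc i)))"
    using assms(1) i unfolding is_walk_def by auto
  moreover have "Suc (?l - Suc (Suc i)) = ?l - Suc i"
    using i by simp
  ultimately show "E (rev xs ! i) (rev xs ! Suc i)"
    using i assms(2) by (simp add: rev_nth)
qed

lemma is_walk_mono:
  "is_walk W F xs \<Longrightarrow> W \<subseteq> V \<Longrightarrow> (\<And>u v. F u v \<Longrightarrow> E u v) \<Longrightarrow> is_walk V E xs"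
  unfolding is_walk_def by blast

lemma gdist_less_length:
  assumes "is_walk V E xs"
  shows "gdist V E (hd xs) (last xs) < length xs"
proof -
  have "length xs = Suc (length xs - 1)"
    using assms by (cases xs) (auto simp: is_walk_def)
  then have "gdist V E (hd xs) (last xs) \<le> length xs - 1"
    unfolding gdist_def using assms by (intro Least_le) blast
  then show ?thesis
    using \<open>length xs = Suc (length xs - 1)\<close> by linarith
qed

lemma gdist_witness:
  assumes "is_walk V E xs"
  obtains ys where "is_walk V E ys" "hd ys = hd xs" "last ys = last xs"
    "length ys = Suc (gdist V E (hd xs) (last xs))"
proof -
  have "length xs = Suc (length xs - 1)"
    using assms by (cases xs) (auto simp: is_walk_def)
  then have "\<exists>m ys. is_walk V E ys \<and> hd ys = hd xs \<and> last ys = last xs \<and> length ys = Suc m"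
    using assms by blast
  then have "\<exists>ys. is_walk V E ys \<and> hd ys = hd xs \<and> last ys = last xs
      \<and> length ys = Suc (gdist V E (hd xs) (last xs))"
    unfolding gdist_def by (rule LeastI_ex)
  then show ?thesis
    using that by blast
qed

lemma isometric_subgraphI:
  assumes "W \<subseteq> V"
    and subgraph: "\<And>u v. F u v \<Longrightarrow> u \<in> W \<and> v \<in> W \<and> E u v"
    and lower: "\<And>xs. is_walk V E xs \<Longrightarrow> d (hd xs) (last xs) < length xs"
    and upper: "\<And>u v. u \<in> W \<Longrightarrow> v \<in> W \<Longrightarrow>
      \<exists>xs. is_walk W F xs \<and> hd xs = u \<and> last xs = v \<and> length xs = Suc (d u v)"
  shows "isometric_subgraph V E W F"
  unfolding isometric_subgraph_def
proof (intro conjI ballI allI impI)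
  fix u v
  assume "u \<in> W" "v \<in> W"
  then obtain xs where xs: "is_walk W F xs" "hd xs = u" "last xs = v" "length xs = Suc (d u v)"
    using upper by blast
  then have le_d: "gdist W F u v \<le> d u v"
    using gdist_less_length[OF xs(1)] by simp
  obtain ys where ys: "is_walk W F ys" "hd ys = u" "last ys = v" "length ys = Suc (gdist W F u v)"
    using gdist_witness[OF xs(1)] xs by metis
  have ys_V: "is_walk V E ys"
    using is_walk_mono[OF ys(1) assms(1)] subgraph by blast
  then have le_W: "gdist V E u v \<le> gdist W F u v"
    using gdist_less_length[OF ys_V] ys by simp
  obtain zs where zs: "is_walk V E zs" "hd zs = u" "last zs = v" "length zs = Suc (gdist V E u v)"
    using gdist_witness[OF ys_V] ys by metis
  have "d u v \<le> gdist V E u v"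
    using lower[OF zs(1)] zs by simp
  then show "gdist W F u v = gdist V E u v"
    using le_d le_W by linarith
qed (use assms(1) subgraph in auto)

lemma finite_if_Qvert: "y \<in> Qverts n \<Longrightarrow> finite y"
  unfolding Qverts_def by (meson Pow_iff finite_atLeastAtMost finite_subset)

lemma Qadj_commute: "Qadj u v \<longleftrightarrow> Qadj v u"
  by (simp add: Qadj_def symdiff_commute)

lemma card_symdiff_less_length_walk:
  "is_walk (Qverts n) Qadj xs \<Longrightarrow> card (hd xs \<ominus> last xs) < length xs"
proof (induction xs rule: induct_list012)
  case 1
  then show ?case by (simp add: is_walk_def)
next
  case (2 x)
  then show ?case by simp
next
  case (3 u v vs)
  then have walk: "is_walk (Qverts n) Qadj (v # vs)" and "u \<in> Qverts n" "Qadj u v"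
    by (simp_all add: is_walk_Cons_Cons)
  moreover have "last (v # vs) \<in> Qverts n"
    using walk by (auto simp: is_walk_def)
  moreover have "v \<in> Qverts n"
    using walk by (auto simp: is_walk_def)
  ultimately have "card (u \<ominus> last (v # vs)) \<le> card (u \<ominus> v) + card (v \<ominus> last (v # vs))"
    by (intro card_symdiff_triangle) (simp_all add: finite_if_Qvert)
  moreover have "card (v \<ominus> last (v # vs)) < length (v # vs)"
    using "3.IH"(2) walk by simp
  ultimately have "card (u \<ominus> last (v # vs)) < length (u # v # vs)"
    using \<open>Qadj u v\<close> by (simp add: Qadj_def del: last.simps)
  then show ?case
    by simp
qed

section \<open>The span of \<open>C\<^sub>k\<close>\<close>

lemma Ofam_Suc: "Ofam (Suc k) = {{p, p + 2} | p. odd p \<and> p + 2 < 2 ^ Suc k}"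
proof (cases k)
  case 0
  then show ?thesis
    by (auto simp: Ofam_def)
next
  case (Suc m)
  have "(\<exists>i. a = {2 * i - 1, 2 * i + 1} \<and> 1 \<le> i \<and> i \<le> 2 ^ k - 1)
    \<longleftrightarrow> (\<exists>p. a = {p, p + 2} \<and> odd p \<and> p + 2 < 2 ^ Suc k)" for a :: "nat set"
  proof
    assume "\<exists>i. a = {2 * i - 1, 2 * i + 1} \<and> 1 \<le> i \<and> i \<le> 2 ^ k - 1"
    then obtain i where "a = {2 * i - 1, 2 * i + 1}" "1 \<le> i" "i \<le> 2 ^ k - 1"
      by blast
    moreover have "(2::nat) ^ k > 0"
      by simp
    ultimately show "\<exists>p. a = {p, p + 2} \<and> odd p \<and> p + 2 < 2 ^ Suc k"
      by (intro exI[of _ "2 * i - 1"]) auto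
  next
    assume "\<exists>p. a = {p, p + 2} \<and> odd p \<and> p + 2 < 2 ^ Suc k"
    then obtain p where "a = {p, p + 2}" "odd p" "p + 2 < 2 ^ Suc k"
      by blast
    moreover obtain i where "p = 2 * i + 1"
      using \<open>odd p\<close> by (blast elim: oddE)
    ultimately show "\<exists>i. a = {2 * i - 1, 2 * i + 1} \<and> 1 \<le> i \<and> i \<le> 2 ^ k - 1"
      by (intro exI[of _ "i + 1"]) auto
  qed
  then show ?thesis
    using Suc by (auto simp: Ofam_def)
qed

lemma Cfam_Suc: "Cfam (Suc k) = Ofam (Suc k) \<union> (`) ((*) 2) ` Cfam k"
  by (cases k) (simp_all add: Ofam_def)

definition half :: "nat set \<Rightarrow> nat set" where
  "half x = {a. 2 * a \<in> x}"

lemma half_symdiff: "half (x \<ominus> y) = half x \<ominus> half y"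
  by (auto simp: half_def)

lemma half_double: "half ((*) 2 ` S) = S"
  by (auto simp: half_def)

lemma half_atLeastAtMost: "half {p..q} = {(p + 1) div 2..q div 2}"
  by (auto simp: half_def)

lemma odd_part_symdiff_double_half: "{a \<in> x. odd a} \<ominus> (*) 2 ` half x = x"
  by (auto simp: half_def image_iff dvd_def)

fun balanced :: "nat \<Rightarrow> nat set \<Rightarrow> bool" where
  "balanced 0 x \<longleftrightarrow> x = {}"
| "balanced (Suc k) x \<longleftrightarrow>
     x \<subseteq> {1..<2 ^ Suc k} \<and> even (card {a \<in> x. odd a}) \<and> balanced k (half x)"

lemma balanced_empty [simp]: "balanced k {}"
  by (induction k) (auto simp: half_def)

lemma balanced_subset: "balanced k x \<Longrightarrow> x \<subseteq> {1..<2 ^ k}"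
  by (cases k) auto

lemma finite_if_balanced: "balanced k x \<Longrightarrow> finite x"
  using balanced_subset finite_subset by blast

lemma balanced_symdiff: "balanced k x \<Longrightarrow> balanced k y \<Longrightarrow> balanced k (x \<ominus> y)"
proof (induction k arbitrary: x y)
  case 0
  then show ?case by simp
next
  case (Suc k)
  have "finite {a \<in> x. odd a}" "finite {a \<in> y. odd a}"
    using finite_if_balanced[OF Suc.prems(1)] finite_if_balanced[OF Suc.prems(2)] by simp_all
  moreover have "{a \<in> x \<ominus> y. odd a} = {a \<in> x. odd a} \<ominus> {a \<in> y. odd a}"
    by auto
  ultimately have "even (card {a \<in> x \<ominus> y. odd a})"
    using Suc.prems by (simp add: even_card_symdiff_iff)
  moreover have "x \<ominus> y \<subseteq> {1..<2 ^ Suc k}"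
    using balanced_subset[OF Suc.prems(1)] balanced_subset[OF Suc.prems(2)] by (rule symdiff_subset)
  ultimately show ?case
    using Suc by (simp add: half_symdiff)
qed

lemma balanced_double:
  assumes "balanced k S"
  shows "balanced (Suc k) ((*) 2 ` S)"
proof -
  have "{a \<in> (*) 2 ` S. odd a} = {}"
    by auto
  then have "even (card {a \<in> (*) 2 ` S. odd a})"
    by (metis card.empty dvd_0_right)
  then show ?thesis
    using assms balanced_subset[OF assms] by (auto simp: half_double)
qed

lemma balanced_Ofam:
  assumes "a \<in> Ofam (Suc k)"
  shows "balanced (Suc k) a"
proof -
  obtain p where p: "a = {p, p + 2}" "odd p" "p + 2 < 2 ^ Suc k"
    using assms by (auto simp: Ofam_Suc)
  have "{b \<in> a. odd b} = a"
    using p by auto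
  moreover have "half a = {}"
    using p by (auto simp: half_def) presburger+
  moreover have "a \<subseteq> {1..<2 ^ Suc k}"
    using p by (auto simp: odd_pos Suc_le_eq)
  ultimately show ?thesis
    using p by simp
qed

lemma balanced_if_in_span: "x \<in> span (Cfam k) \<Longrightarrow> balanced k x"
proof (induction k arbitrary: x)
  case 0
  then show ?case
    by (induction rule: span.induct) auto
next
  case (Suc k)
  from Suc.prems show ?case
  proof (induction rule: span.induct)
    case span_empty
    then show ?case by simp
  next
    case (span_step a s)
    from \<open>a \<in> Cfam (Suc k)\<close> consider "a \<in> Ofam (Suc k)" | S where "S \<in> Cfam k" "a = (*) 2 ` S"
      unfolding Cfam_Suc by blast
    then have "balanced (Suc k) a"
    proof cases
      case 1
      then show ?thesis by (rule balanced_Ofam)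
    next
      case 2
      then show ?thesis using Suc.IH by (metis balanced_double span_base)
    qed
    then show ?case
      using span_step.IH by (rule balanced_symdiff)
  qed
qed

lemma singleton_symdiff_odd_in_span:
  assumes "odd p" "p < 2 ^ Suc k"
  shows "{1} \<ominus> {p} \<in> span (Ofam (Suc k))"
proof -
  obtain i where "p = 2 * i + 1"
    using assms(1) by (blast elim: oddE)
  with assms(2) show ?thesis
  proof (induction i arbitrary: p)
    case 0
    then show ?case by (simp add: span.span_empty)
  next
    case (Suc i)
    have "{2 * i + 1, 2 * i + 3} \<in> Ofam (Suc k)"
      using Suc.prems unfolding Ofam_Suc by (intro CollectI exI[of _ "2 * i + 1"]) auto
    moreover have "{1} \<ominus> {p} = ({1} \<ominus> {2 * i + 1}) \<ominus> {2 * i + 1, 2 * i + 3}"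
      using Suc.prems by auto
    ultimately show ?case
      using Suc by (auto intro: span_symdiff span_base)
  qed
qed

text \<open>Adjoining 1 to odd-sized sets fixes the parity, so each new element \<open>a\<close> costs only
  the generator sum \<open>{1} \<ominus> {a}\<close>.\<close>
lemma odd_set_in_span:
  assumes "finite A" "\<forall>a \<in> A. odd a \<and> a < 2 ^ Suc k"
  shows "A \<ominus> (if even (card A) then {} else {1}) \<in> span (Ofam (Suc k))"
  using assms
proof (induction A rule: finite_induct)
  case empty
  then show ?case by (simp add: span.span_empty)
next
  case (insert a A)
  have "insert a A \<ominus> (if even (card (insert a A)) then {} else {1})
      = (A \<ominus> (if even (card A) then {} else {1})) \<ominus> ({1} \<ominus> {a})"
    using insert.hyps by (cases "even (card A)") auto
  moreover have "{1} \<ominus> {a} \<in> span (Ofam (Suc k))"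
    using insert.prems singleton_symdiff_odd_in_span by blast
  moreover have "A \<ominus> (if even (card A) then {} else {1}) \<in> span (Ofam (Suc k))"
    using insert.IH insert.prems by simp
  ultimately show ?case
    by (simp add: span_symdiff)
qed

lemma in_span_if_balanced: "balanced k x \<Longrightarrow> x \<in> span (Cfam k)"
proof (induction k arbitrary: x)
  case 0
  then show ?case by (simp add: span.span_empty)
next
  case (Suc k)
  have "finite {a \<in> x. odd a}"
    using finite_if_balanced[OF Suc.prems] by simp
  moreover have "\<forall>a \<in> {a \<in> x. odd a}. odd a \<and> a < 2 ^ Suc k"
    using balanced_subset[OF Suc.prems] by auto
  ultimately have "{a \<in> x. odd a} \<in> span (Ofam (Suc k))"
    using odd_set_in_span[of "{a \<in> x. odd a}" k] Suc.prems
    by (simp only: balanced.simps if_True symdiff_empty)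
  then have odd_part: "{a \<in> x. odd a} \<in> span (Cfam (Suc k))"
    by (rule span_mono[rotated]) (auto simp: Cfam_Suc)
  have "(*) 2 ` half x \<in> span ((`) ((*) 2) ` Cfam k)"
  proof (rule span_image)
    show "inj ((*) (2::nat))"
      by (rule injI) simp
    show "half x \<in> span (Cfam k)"
      using Suc.IH Suc.prems by simp
  qed
  then have "(*) 2 ` half x \<in> span (Cfam (Suc k))"
    by (rule span_mono[rotated]) (auto simp: Cfam_Suc)
  with odd_part have "{a \<in> x. odd a} \<ominus> (*) 2 ` half x \<in> span (Cfam (Suc k))"
    by (rule span_symdiff)
  then show ?case
    by (simp add: odd_part_symdiff_double_half)
qed

lemma span_Cfam_eq: "span (Cfam k) = {x. balanced k x}"
  using balanced_if_in_span in_span_if_balanced by blast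

lemma not_balanced_interval: "1 \<le> p \<Longrightarrow> p \<le> q \<Longrightarrow> \<not> balanced k {p..q}"
proof (induction k arbitrary: p q)
  case 0
  then show ?case by simp
next
  case (Suc k)
  show ?case
  proof (cases "(p + 1) div 2 \<le> q div 2")
    case True
    then have "\<not> balanced k (half {p..q})"
      using Suc by (simp add: half_atLeastAtMost)
    then show ?thesis by simp
  next
    case False
    then have "q = p" "odd p"
      using Suc.prems by presburger+
    then have "{a \<in> {p..q}. odd a} = {p}"
      by auto
    then show ?thesis by simp
  qed
qed

text \<open>The segment length \<open>j\<close> is chosen bit by bit: the induction hypothesis for the halved set
  determines \<open>j div 2\<close>, and the last bit of \<open>j\<close> corrects the parity of the odd part.\<close>
lemma balanced_symdiff_initial_segment:
  "y \<subseteq> {1..<2 ^ k} \<Longrightarrow> \<exists>j < 2 ^ k. balanced k (y \<ominus> {1..j})"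
proof (induction k arbitrary: y)
  case 0
  then show ?case by auto
next
  case (Suc k)
  have "half y \<subseteq> {1..<2 ^ k}"
    using Suc.prems by (auto simp: half_def)
  then obtain j' where j': "j' < 2 ^ k" "balanced k (half y \<ominus> {1..j'})"
    using Suc.IH by blast
  have "finite y"
    using Suc.prems by (rule finite_subset) simp
  have fin: "finite {a \<in> y \<ominus> {1..2 * j'}. odd a}"
    using finite_symdiff[OF \<open>finite y\<close> finite_atLeastAtMost] by (rule finite_subset[rotated]) blast
  obtain j where j: "j div 2 = j'" "even (card {a \<in> y \<ominus> {1..j}. odd a})"
  proof (cases "even (card {a \<in> y \<ominus> {1..2 * j'}. odd a})")
    case True
    then show ?thesis using that[of "2 * j'"] by simp
  next
    case False
    have "{a \<in> y \<ominus> {1..2 * j' + 1}. odd a} = {a \<in> y \<ominus> {1..2 * j'}. odd a} \<ominus> {2 * j' + 1}"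
      by auto
    then have "even (card {a \<in> y \<ominus> {1..2 * j' + 1}. odd a})"
      using False fin by (simp add: even_card_symdiff_iff)
    then show ?thesis using that[of "2 * j' + 1"] by simp
  qed
  have "j < 2 ^ Suc k"
    using j(1) j'(1) by auto
  then have "y \<ominus> {1..j} \<subseteq> {1..<2 ^ Suc k}"
    using Suc.prems by (auto simp: subset_iff)
  moreover have "half (y \<ominus> {1..j}) = half y \<ominus> {1..j'}"
    using j(1) by (simp add: half_symdiff half_atLeastAtMost)
  ultimately show ?case
    using \<open>j < 2 ^ Suc k\<close> j(2) j'(2) by auto
qed

section \<open>The cycles \<open>C(x)\<close>\<close>

lemma inj_on_add_mod: "inj_on (\<lambda>s. (a + s) mod n) {..<n::nat}"
proof -
  have False if "s < s'" "s' < n" "(a + s) mod n = (a + s') mod n" for s s' :: nat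
  proof -
    have "n dvd (a + s') - (a + s)"
      using that mod_eq_dvd_iff_nat[of "a + s" "a + s'" n] by simp
    then have "n dvd s' - s"
      by simp
    then show False
      using that(1,2) nat_dvd_not_less[of "s' - s" n] by simp
  qed
  then show ?thesis
    by (intro inj_onI) (metis lessThan_iff linorder_neqE_nat)
qed

lemma inj_on_Suc_add_mod: "inj_on (\<lambda>s. (a + s) mod n + 1) {..<n::nat}"
proof -
  have "inj_on (Suc \<circ> (\<lambda>s. (a + s) mod n)) {..<n}"
    by (rule comp_inj_on[OF inj_on_add_mod]) simp
  then show ?thesis
    by (simp add: comp_def)
qed

definition cyc_mask :: "nat \<Rightarrow> nat \<Rightarrow> nat set" where
  "cyc_mask n j = (if j \<le> n then {1..j} else {1..n} \<ominus> {1..j - n})"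

lemma cyc_vertex_eq_symdiff_mask: "cyc_vertex n x j = x \<ominus> cyc_mask n j"
  by (simp add: cyc_vertex_def cyc_mask_def symdiff_assoc)

lemma mem_cyc_mask: "j \<le> 2 * n \<Longrightarrow> i \<in> cyc_mask n j \<longleftrightarrow> 1 \<le> i \<and> i \<le> n \<and> i \<le> j \<and> j < i + n"
  by (auto simp: cyc_mask_def)

lemma cyc_mask_subset: "j \<le> 2 * n \<Longrightarrow> cyc_mask n j \<subseteq> {1..n}"
  by (auto simp: cyc_mask_def)

lemma cyc_mask_step:
  assumes "0 < n"
  shows "cyc_mask n (a mod (2 * n)) \<ominus> cyc_mask n ((a + 1) mod (2 * n)) = {a mod n + 1}"
proof -
  define j where "j = a mod (2 * n)"
  have j: "j < 2 * n"
    using assms by (simp add: j_def)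
  have a_mod: "a mod n = j mod n"
    by (simp add: j_def mod_mod_cancel)
  have succ: "(a + 1) mod (2 * n) = (j + 1) mod (2 * n)"
    by (simp add: j_def mod_Suc_eq)
  consider "j < n" | "n \<le> j" "j + 1 < 2 * n" | "j + 1 = 2 * n"
    using j by linarith
  then have "cyc_mask n j \<ominus> cyc_mask n ((j + 1) mod (2 * n)) = {j mod n + 1}"
  proof cases
    case 1
    then have "(j + 1) mod (2 * n) = j + 1" "j mod n = j"
      by simp_all
    then show ?thesis
      using 1 by (intro set_eqI) (simp add: mem_cyc_mask; linarith)
  next
    case 2
    then have "(j + 1) mod (2 * n) = j + 1" "j mod n = j - n"
      by (simp_all add: le_mod_geq)
    then show ?thesis
      using 2 by (intro set_eqI) (simp add: mem_cyc_mask; linarith)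
  next
    case 3
    then have "j = (n - 1) + n"
      by simp
    then have "j mod n = n - 1"
      using assms by (simp only: mod_add_self2) simp
    moreover have "(j + 1) mod (2 * n) = 0"
      using 3 by simp
    ultimately show ?thesis
      using 3 by (intro set_eqI) (simp add: mem_cyc_mask; linarith)
  qed
  then show ?thesis
    unfolding a_mod succ j_def [symmetric] .
qed

lemma cyc_mask_arc:
  assumes "0 < n" "t \<le> n"
  shows "cyc_mask n (a mod (2 * n)) \<ominus> cyc_mask n ((a + t) mod (2 * n))
    = (\<lambda>s. (a + s) mod n + 1) ` {..<t}"
  using assms(2)
proof (induction t)
  case 0
  then show ?case by simp
next
  case (Suc t)
  let ?f = "\<lambda>s. (a + s) mod n + 1"
  let ?M = "\<lambda>i. cyc_mask n ((a + i) mod (2 * n))"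
  have "?f t \<notin> ?f ` {..<t}"
    using inj_on_image_mem_iff[OF inj_on_Suc_add_mod[of a n], of t "{..<t}"] Suc.prems by simp
  have "?M 0 \<ominus> ?M (Suc t) = (?M 0 \<ominus> ?M t) \<ominus> (?M t \<ominus> ?M (Suc t))"
    by (rule symdiff_symdiff_cancel [symmetric])
  also have "?M 0 \<ominus> ?M t = ?f ` {..<t}"
    using Suc.IH Suc.prems by simp
  also have "?M t \<ominus> ?M (Suc t) = {?f t}"
    using cyc_mask_step[OF assms(1), of "a + t"] by simp
  also have "?f ` {..<t} \<ominus> {?f t} = ?f ` {..<Suc t}"
    unfolding lessThan_Suc image_insert by (rule symdiff_singleton) fact
  finally show ?case
    by simp
qed

lemma card_cyc_mask_arc:
  assumes "0 < n" "t \<le> n"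
  shows "card (cyc_mask n (a mod (2 * n)) \<ominus> cyc_mask n ((a + t) mod (2 * n))) = t"
proof -
  have "inj_on (\<lambda>s. (a + s) mod n + 1) {..<t}"
    by (rule inj_on_subset[OF inj_on_Suc_add_mod]) (use assms(2) in auto)
  then show ?thesis
    by (simp add: cyc_mask_arc[OF assms] card_image)
qed

lemma cyc_mask_symdiff_cases:
  assumes "j < j'" "j' < 2 * n"
  obtains "n \<in> cyc_mask n j \<ominus> cyc_mask n j'"
    | p q where "1 \<le> p" "p \<le> q" "cyc_mask n j \<ominus> cyc_mask n j' = {p..q}"
proof -
  have j: "j \<le> 2 * n" "j' \<le> 2 * n"
    using assms by simp_all
  consider "j' \<le> n" | "j < n" "n < j'" | "n \<le> j"
    by linarith
  then show ?thesis
  proof cases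
    case 1
    have "cyc_mask n j \<ominus> cyc_mask n j' = {j + 1..j'}"
      using 1 assms by (intro set_eqI) (simp add: mem_cyc_mask[OF j(1)] mem_cyc_mask[OF j(2)]; arith)
    then show ?thesis
      by (rule that(2)[rotated 2]) (use assms in auto)
  next
    case 2
    then show ?thesis
      using assms that(1) by (simp add: mem_cyc_mask[OF j(1)] mem_cyc_mask[OF j(2)])
  next
    case 3
    have "cyc_mask n j \<ominus> cyc_mask n j' = {j - n + 1..j' - n}"
      using 3 assms by (intro set_eqI) (simp add: mem_cyc_mask[OF j(1)] mem_cyc_mask[OF j(2)]; arith)
    then show ?thesis
      by (rule that(2)[rotated 2]) (use assms 3 in auto)
  qed
qed

lemma not_balanced_cyc_mask_symdiff:
  assumes "n = 2 ^ k" "j < 2 * n" "j' < 2 * n" "j \<noteq> j'"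
  shows "\<not> balanced k (cyc_mask n j \<ominus> cyc_mask n j')"
proof
  assume bal: "balanced k (cyc_mask n j \<ominus> cyc_mask n j')"
  obtain i i' where i: "i < i'" "i' < 2 * n"
    and eq: "cyc_mask n j \<ominus> cyc_mask n j' = cyc_mask n i \<ominus> cyc_mask n i'"
    using assms(2-4) symdiff_commute by (metis linorder_neqE_nat)
  have "n \<notin> cyc_mask n j \<ominus> cyc_mask n j'"
    using balanced_subset[OF bal] assms(1) by auto
  then show False
    using cyc_mask_symdiff_cases[OF i] not_balanced_interval bal unfolding eq by metis
qed

lemma cyc_vertex_eq_cyc_vertexD:
  assumes "n = 2 ^ k" "balanced k x" "balanced k y" "j < 2 * n" "j' < 2 * n"
    and "cyc_vertex n x j = cyc_vertex n y j'"
  shows "x = y \<and> j = j'"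
proof -
  have "x \<ominus> y = cyc_mask n j \<ominus> cyc_mask n j'"
    using assms(6) unfolding cyc_vertex_eq_symdiff_mask set_eq_iff symdiff_iff by blast
  then have "balanced k (cyc_mask n j \<ominus> cyc_mask n j')"
    using assms(2,3) by (metis balanced_symdiff)
  then have "j = j'"
    using not_balanced_cyc_mask_symdiff assms(1,4,5) by blast
  then show ?thesis
    using assms(6) unfolding cyc_vertex_eq_symdiff_mask set_eq_iff symdiff_iff by blast
qed

lemma cyc_vertex_in_Qverts:
  assumes "x \<subseteq> {1..n}" "j < 2 * n"
  shows "cyc_vertex n x j \<in> Qverts n"
  unfolding Qverts_def cyc_vertex_eq_symdiff_mask Pow_iff
  by (rule symdiff_subset[OF assms(1) cyc_mask_subset]) (use assms(2) in simp)

lemma cyc_vertex_flip: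
  assumes "j < 2 * n"
  shows "cyc_vertex n x j \<ominus> cyc_vertex n x ((j + 1) mod (2 * n)) = {j mod n + 1}"
  using cyc_mask_step[of n j] assms
  by (simp add: cyc_vertex_eq_symdiff_mask symdiff_cancel_left)

lemma Qadj_cyc_vertex: "j < 2 * n \<Longrightarrow> Qadj (cyc_vertex n x j) (cyc_vertex n x ((j + 1) mod (2 * n)))"
  using cyc_vertex_flip[of j n x] by (simp add: Qadj_def)

lemma cyc_adj_commute: "cyc_adj n x u v \<Longrightarrow> cyc_adj n x v u"
  by (auto simp: cyc_adj_def insert_commute)

lemma cyc_adjD:
  assumes "cyc_adj n x u v"
  shows "u \<in> cyc_verts n x \<and> v \<in> cyc_verts n x \<and> Qadj u v"
proof -
  obtain j where j: "j < 2 * n"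
    and uv: "{u, v} = {cyc_vertex n x j, cyc_vertex n x ((j + 1) mod (2 * n))}"
    using assms by (auto simp: cyc_adj_def)
  then have "(j + 1) mod (2 * n) < 2 * n"
    by simp
  then have "u \<in> cyc_verts n x \<and> v \<in> cyc_verts n x"
    using j uv by (auto simp: cyc_verts_def doubleton_eq_iff)
  moreover have "Qadj u v"
    using Qadj_cyc_vertex[OF j, of x] uv by (auto simp: doubleton_eq_iff Qadj_commute)
  ultimately show ?thesis
    by blast
qed

definition cyc_arc :: "nat \<Rightarrow> nat set \<Rightarrow> nat \<Rightarrow> nat \<Rightarrow> nat set list" where
  "cyc_arc n x a t = map (\<lambda>s. cyc_vertex n x ((a + s) mod (2 * n))) [0..<Suc t]"

lemma length_cyc_arc [simp]: "length (cyc_arc n x a t) = Suc t"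
  by (simp add: cyc_arc_def)

lemma hd_cyc_arc [simp]: "hd (cyc_arc n x a t) = cyc_vertex n x (a mod (2 * n))"
  by (simp add: cyc_arc_def hd_map del: upt_Suc)

lemma last_cyc_arc [simp]: "last (cyc_arc n x a t) = cyc_vertex n x ((a + t) mod (2 * n))"
  by (simp add: cyc_arc_def last_map del: upt_Suc)

lemma is_walk_cyc_arc:
  assumes "0 < n"
  shows "is_walk (cyc_verts n x) (cyc_adj n x) (cyc_arc n x a t)"
  unfolding is_walk_def
proof (intro conjI allI impI)
  show "cyc_arc n x a t \<noteq> []"
    by (simp add: cyc_arc_def del: upt_Suc)
  show "set (cyc_arc n x a t) \<subseteq> cyc_verts n x"
    using assms by (auto simp: cyc_arc_def cyc_verts_def)
  fix i
  assume "Suc i < length (cyc_arc n x a t)"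
  moreover have "cyc_adj n x (cyc_vertex n x ((a + i) mod (2 * n)))
      (cyc_vertex n x (((a + i) mod (2 * n) + 1) mod (2 * n)))"
    using assms unfolding cyc_adj_def by (intro exI[of _ "(a + i) mod (2 * n)"]) simp
  ultimately show "cyc_adj n x (cyc_arc n x a t ! i) (cyc_arc n x a t ! Suc i)"
    by (simp add: cyc_arc_def mod_Suc_eq del: upt_Suc)
qed

lemma short_arc:
  fixes a b m :: nat
  assumes "a < m" "b < m"
  obtains t where "2 * t \<le> m" "b = (a + t) mod m" | t where "2 * t \<le> m" "a = (b + t) mod m"
proof -
  have "\<exists>t. 2 * t \<le> m \<and> (b = (a + t) mod m \<or> a = (b + t) mod m)" if "a \<le> b" "b < m" for a b
  proof (cases "2 * (b - a) \<le> m")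
    case True
    then show ?thesis
      using that by (intro exI[of _ "b - a"]) simp
  next
    case False
    then have "a = (b + (m - (b - a))) mod m"
      using that by (simp add: le_mod_geq)
    then show ?thesis
      using False by (intro exI[of _ "m - (b - a)"]) simp
  qed
  then show ?thesis
    using assms that by (metis linorder_le_cases)
qed

lemma cyc_geodesic:
  assumes "0 < n" "u \<in> cyc_verts n x" "v \<in> cyc_verts n x"
  shows "\<exists>ws. is_walk (cyc_verts n x) (cyc_adj n x) ws \<and> hd ws = u \<and> last ws = v
    \<and> length ws = Suc (card (u \<ominus> v))"
proof -
  have arc: "\<exists>ws. is_walk (cyc_verts n x) (cyc_adj n x) ws \<and> hd ws = cyc_vertex n x a
      \<and> last ws = cyc_vertex n x b \<and> length ws = Suc (card (cyc_vertex n x a \<ominus> cyc_vertex n x b))"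
    if "a < 2 * n" "2 * t \<le> 2 * n" "b = (a + t) mod (2 * n)" for a b t
  proof -
    have "card (cyc_vertex n x a \<ominus> cyc_vertex n x b) = t"
      using card_cyc_mask_arc[OF assms(1), of t a] that
      by (simp add: cyc_vertex_eq_symdiff_mask symdiff_cancel_left)
    then show ?thesis
      using is_walk_cyc_arc[OF assms(1), of x a t] that by (intro exI[of _ "cyc_arc n x a t"]) simp
  qed
  obtain a b where ab: "a < 2 * n" "b < 2 * n" "u = cyc_vertex n x a" "v = cyc_vertex n x b"
    using assms(2,3) by (auto simp: cyc_verts_def)
  from ab(1,2) show ?thesis
  proof (cases rule: short_arc)
    case (1 t)
    then show ?thesis
      using arc[of a t b] ab by blast
  next
    case (2 t)
    then obtain ws where ws: "is_walk (cyc_verts n x) (cyc_adj n x) ws" "hd ws = v" "last ws = u"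
      "length ws = Suc (card (v \<ominus> u))"
      using arc[of b t a] ab by blast
    then have "ws \<noteq> []"
      by (auto simp: is_walk_def)
    then show ?thesis
      using ws is_walk_rev[OF ws(1) cyc_adj_commute]
      by (intro exI[of _ "rev ws"]) (simp add: hd_rev last_rev symdiff_commute)
  qed
qed

lemma isometric_cyc:
  assumes "0 < n" "x \<subseteq> {1..n}"
  shows "isometric_subgraph (Qverts n) Qadj (cyc_verts n x) (cyc_adj n x)"
proof (rule isometric_subgraphI[where d = "\<lambda>u v. card (u \<ominus> v)"])
  show "cyc_verts n x \<subseteq> Qverts n"
    using assms(2) by (auto simp: cyc_verts_def cyc_vertex_in_Qverts)
qed (use assms cyc_adjD card_symdiff_less_length_walk cyc_geodesic in auto)

lemma cyc_isometric_cycle: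
  assumes "n = 2 ^ k" "balanced k x"
  shows "inj_on (cyc_vertex n x) {0..<2 * n} \<and>
    (\<forall>j < 2 * n. cyc_vertex n x j \<in> Qverts n \<and>
      Qadj (cyc_vertex n x j) (cyc_vertex n x ((j + 1) mod (2 * n)))) \<and>
    (\<forall>j < 2 * n. cyc_vertex n x j \<ominus> cyc_vertex n x ((j + 1) mod (2 * n)) = {j mod n + 1}) \<and>
    isometric_subgraph (Qverts n) Qadj (cyc_verts n x) (cyc_adj n x)"
proof -
  have n: "0 < n" and x: "x \<subseteq> {1..n}"
    using assms balanced_subset[OF assms(2)] by auto
  have "inj_on (cyc_vertex n x) {0..<2 * n}"
    using cyc_vertex_eq_cyc_vertexD[OF assms(1,2,2)] by (intro inj_onI) auto
  then show ?thesis
    using cyc_vertex_in_Qverts[OF x] Qadj_cyc_vertex[of _ n x] cyc_vertex_flip[of _ n x]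
      isometric_cyc[OF n x] by simp
qed

lemma disjoint_cyc_verts:
  assumes "n = 2 ^ k" "balanced k x" "balanced k y" "x \<noteq> y"
  shows "cyc_verts n x \<inter> cyc_verts n y = {}"
proof (rule equals0I)
  fix z
  assume "z \<in> cyc_verts n x \<inter> cyc_verts n y"
  then obtain j j' where "j < 2 * n" "j' < 2 * n" "cyc_vertex n x j = cyc_vertex n y j'"
    by (auto simp: cyc_verts_def)
  then show False
    using cyc_vertex_eq_cyc_vertexD[OF assms(1-3)] assms(4) by blast
qed

lemma cyc_verts_cover:
  assumes "n = 2 ^ k" "y \<in> Qverts n"
  obtains x where "balanced k x" "y \<in> cyc_verts n x"
proof -
  define i where "i = (if n \<in> y then n else 0)"
  have "y \<ominus> {1..i} \<subseteq> {1..n}"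
    using assms(2) by (simp add: Qverts_def i_def symdiff_subset)
  moreover have "n \<notin> y \<ominus> {1..i}"
    using assms(1) by (simp add: i_def)
  ultimately have "y \<ominus> {1..i} \<subseteq> {1..n} - {n}"
    by blast
  also have "{1..n} - {n} = {1..<2 ^ k}"
    using assms(1) by auto
  finally have "y \<ominus> {1..i} \<subseteq> {1..<2 ^ k}" .
  then obtain j where j: "j < 2 ^ k" "balanced k (y \<ominus> {1..i} \<ominus> {1..j})"
    using balanced_symdiff_initial_segment by blast
  have "cyc_mask n (i + j) = {1..i} \<ominus> {1..j}"
    using j(1) assms(1) by (simp add: cyc_mask_def i_def)
  then have "cyc_vertex n (y \<ominus> {1..i} \<ominus> {1..j}) (i + j) = y"
    by (auto simp: cyc_vertex_eq_symdiff_mask)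
  moreover have "i + j < 2 * n"
    using j(1) assms(1) by (simp add: i_def)
  ultimately have "y \<in> cyc_verts n (y \<ominus> {1..i} \<ominus> {1..j})"
    unfolding cyc_verts_def by (metis atLeastLessThan_iff image_eqI zero_le)
  with j(2) show ?thesis
    by (rule that)
qed

lemma Union_cyc_verts:
  assumes "n = 2 ^ k"
  shows "(\<Union>x \<in> {x. balanced k x}. cyc_verts n x) = Qverts n"
proof
  show "(\<Union>x \<in> {x. balanced k x}. cyc_verts n x) \<subseteq> Qverts n"
  proof
    fix z
    assume "z \<in> (\<Union>x \<in> {x. balanced k x}. cyc_verts n x)"
    then obtain x j where x: "balanced k x" and j: "j < 2 * n" and z: "z = cyc_vertex n x j"
      by (auto simp: cyc_verts_def)
    have "x \<subseteq> {1..n}"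
      using balanced_subset[OF x] assms by auto
    then show "z \<in> Qverts n"
      unfolding z using j by (rule cyc_vertex_in_Qverts)
  qed
  show "Qverts n \<subseteq> (\<Union>x \<in> {x. balanced k x}. cyc_verts n x)"
  proof
    fix y
    assume "y \<in> Qverts n"
    then obtain x where "balanced k x" "y \<in> cyc_verts n x"
      by (rule cyc_verts_cover[OF assms])
    then show "y \<in> (\<Union>x \<in> {x. balanced k x}. cyc_verts n x)"
      by blast
  qed
qed

theorem mainTheorem5:
  fixes k n :: nat
  assumes "k \<ge> 1" and "n = 2 ^ k"
  shows "(\<forall>x \<in> span (Cfam k).
            \<comment> \<open>C(x) is a cycle of length 2n in Q_n (2n distinct vertices, consecutive ones adjacent)\<close>
            inj_on (cyc_vertex n x) {0..<2*n} \<and>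
            (\<forall>j<2*n. cyc_vertex n x j \<in> Qverts n \<and>
                      Qadj (cyc_vertex n x j) (cyc_vertex n x ((j + 1) mod (2*n)))) \<and>
            \<comment> \<open>flip sequence (1,...,n,1,...,n)\<close>
            (\<forall>j<2*n. cyc_vertex n x j \<ominus> cyc_vertex n x ((j + 1) mod (2*n)) = {j mod n + 1}) \<and>
            \<comment> \<open>isometric\<close>
            isometric_subgraph (Qverts n) Qadj (cyc_verts n x) (cyc_adj n x))
         \<and> (\<Union>x \<in> span (Cfam k). cyc_verts n x) = Qverts n
         \<and> (\<forall>x \<in> span (Cfam k). \<forall>y \<in> span (Cfam k). x \<noteq> y \<longrightarrow> cyc_verts n x \<inter> cyc_verts n y = {})"
proof -
  show ?thesis
    unfolding span_Cfam_eq
    using cyc_isometric_cycle[OF assms(2)] Union_cyc_verts[OF assms(2)]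
      disjoint_cyc_verts[OF assms(2)] by simp
qed

end
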